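(* In the category $\mathbf{Lens}$, the classes of all epimorphisms, regular epimorphisms, strong epimorphisms and extremal epimorphisms coincide.
   Context: A lens $F\colon \mathbf{A}\to\mathbf{B}$ between small categories consists of a functor $F\colon\mathbf{A}\to\mathbf{B}$ (the get functor) together with, for each object $A$ of $\mathbf{A}$, a function $\varphi_{F,A}$ from the set of morphisms of $\mathbf{B}$ with domain $FA$ to the set of morphisms of $\mathbf{A}$ with domain $A$, such that: $F(\varphi_{F,A}b)=b$; $\varphi_{F,A}(\mathrm{id}_{FA})=\mathrm{id}_A$; and $\varphi_{F,A}(b'\circ b)=\varphi_{F,A'}(b')\circ\varphi_{F,A}(b)$ whenever $b$ has domain $FA$, $A'$ is the codomain of $\varphi_{F,A}b$, and $b'$ has domain $FA'$. $\mathbf{Lens}$ is the category of small categories and lenses, with composite of $F\colon\mathbf{A}\to\mathbf{B}$, $G\colon\mathbf{B}\to\mathbf{C}$ having get functor $G\circ F$ and puts $\varphi_{G\circ F,A}(c)=\varphi_{F,A}(\varphi_{G,FA}(c))$. *)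

theory Defs
  imports Main
begin

record ('o, 'a) category =
  Ob  :: "'o set"
  Hom :: "'a set"
  Src :: "'a \<Rightarrow> 'o"
  Tgt :: "'a \<Rightarrow> 'o"
  Idt :: "'o \<Rightarrow> 'a"
  Cmp :: "'a \<Rightarrow> 'a \<Rightarrow> 'a"   (* Cmp g f = g \<circ> f *)

definition is_category :: "('o, 'a) category \<Rightarrow> bool" where
  "is_category C \<longleftrightarrow>
     (\<forall>f\<in>Hom C. Src C f \<in> Ob C \<and> Tgt C f \<in> Ob C) \<and>
     (\<forall>x\<in>Ob C. Idt C x \<in> Hom C \<and> Src C (Idt C x) = x \<and> Tgt C (Idt C x) = x) \<and>
     (\<forall>f\<in>Hom C. \<forall>g\<in>Hom C. Tgt C f = Src C g \<longrightarrow>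
        Cmp C g f \<in> Hom C \<and> Src C (Cmp C g f) = Src C f \<and> Tgt C (Cmp C g f) = Tgt C g) \<and>
     (\<forall>f\<in>Hom C. \<forall>g\<in>Hom C. \<forall>h\<in>Hom C. Tgt C f = Src C g \<longrightarrow> Tgt C g = Src C h \<longrightarrow>
        Cmp C h (Cmp C g f) = Cmp C (Cmp C h g) f) \<and>
     (\<forall>f\<in>Hom C. Cmp C (Idt C (Tgt C f)) f = f \<and> Cmp C f (Idt C (Src C f)) = f)"

definition epi :: "('o, 'a) category \<Rightarrow> 'a \<Rightarrow> bool" where
  "epi K e \<longleftrightarrow> e \<in> Hom K \<and>
     (\<forall>g\<in>Hom K. \<forall>h\<in>Hom K. Src K g = Tgt K e \<longrightarrow> Src K h = Tgt K e \<longrightarrow> Tgt K g = Tgt K h \<longrightarrow>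
        Cmp K g e = Cmp K h e \<longrightarrow> g = h)"

definition mono :: "('o, 'a) category \<Rightarrow> 'a \<Rightarrow> bool" where
  "mono K m \<longleftrightarrow> m \<in> Hom K \<and>
     (\<forall>g\<in>Hom K. \<forall>h\<in>Hom K. Tgt K g = Src K m \<longrightarrow> Tgt K h = Src K m \<longrightarrow> Src K g = Src K h \<longrightarrow>
        Cmp K m g = Cmp K m h \<longrightarrow> g = h)"

definition iso :: "('o, 'a) category \<Rightarrow> 'a \<Rightarrow> bool" where
  "iso K f \<longleftrightarrow> f \<in> Hom K \<and>
     (\<exists>g\<in>Hom K. Src K g = Tgt K f \<and> Tgt K g = Src K f \<and>
        Cmp K g f = Idt K (Src K f) \<and> Cmp K f g = Idt K (Tgt K f))"

definition coequalizer :: "('o, 'a) category \<Rightarrow> 'a \<Rightarrow> 'a \<Rightarrow> 'a \<Rightarrow> bool" where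
  "coequalizer K u v e \<longleftrightarrow>
     u \<in> Hom K \<and> v \<in> Hom K \<and> Src K u = Src K v \<and> Tgt K u = Tgt K v \<and>
     e \<in> Hom K \<and> Src K e = Tgt K u \<and> Cmp K e u = Cmp K e v \<and>
     (\<forall>h\<in>Hom K. Src K h = Tgt K u \<longrightarrow> Cmp K h u = Cmp K h v \<longrightarrow>
        (\<exists>!k. k \<in> Hom K \<and> Src K k = Tgt K e \<and> Tgt K k = Tgt K h \<and> Cmp K k e = h))"

definition regular_epi :: "('o, 'a) category \<Rightarrow> 'a \<Rightarrow> bool" where
  "regular_epi K e \<longleftrightarrow> (\<exists>u v. coequalizer K u v e)"

definition strong_epi :: "('o, 'a) category \<Rightarrow> 'a \<Rightarrow> bool" where
  "strong_epi K e \<longleftrightarrow> epi K e \<and>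
     (\<forall>m u v. mono K m \<longrightarrow> u \<in> Hom K \<longrightarrow> v \<in> Hom K \<longrightarrow>
        Src K u = Src K e \<longrightarrow> Tgt K u = Src K m \<longrightarrow>
        Src K v = Tgt K e \<longrightarrow> Tgt K v = Tgt K m \<longrightarrow>
        Cmp K m u = Cmp K v e \<longrightarrow>
        (\<exists>d\<in>Hom K. Src K d = Tgt K e \<and> Tgt K d = Src K m \<and>
           Cmp K d e = u \<and> Cmp K m d = v))"

definition extremal_epi :: "('o, 'a) category \<Rightarrow> 'a \<Rightarrow> bool" where
  "extremal_epi K e \<longleftrightarrow> epi K e \<and>
     (\<forall>m g. mono K m \<longrightarrow> g \<in> Hom K \<longrightarrow>
        Src K g = Src K e \<longrightarrow> Tgt K g = Src K m \<longrightarrow> Tgt K m = Tgt K e \<longrightarrow>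
        Cmp K m g = e \<longrightarrow> iso K m)"

type_synonym 'u smallcat = "('u, 'u) category"

text \<open>A lens: source and target category, get functor (on objects and on arrows),
  and the put operation lput A b = phi_{F,A}(b).  All data are extensional
  (undefined outside their intended domains), so that HOL equality of lenses is
  the intended equality of morphisms in Lens.\<close>
record 'u lens =
  lsrc :: "'u smallcat"
  ltgt :: "'u smallcat"
  lob  :: "'u \<Rightarrow> 'u"
  lar  :: "'u \<Rightarrow> 'u"
  lput :: "'u \<Rightarrow> 'u \<Rightarrow> 'u"

definition is_lens :: "'u lens \<Rightarrow> bool" where
  "is_lens F \<longleftrightarrow>
    (let A = lsrc F; B = ltgt F in
     is_category A \<and> is_category B \<and>
     \<comment> \<open>get functor\<close>
     (\<forall>x\<in>Ob A. lob F x \<in> Ob B) \<and>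
     (\<forall>f\<in>Hom A. lar F f \<in> Hom B \<and> Src B (lar F f) = lob F (Src A f) \<and>
                 Tgt B (lar F f) = lob F (Tgt A f)) \<and>
     (\<forall>x\<in>Ob A. lar F (Idt A x) = Idt B (lob F x)) \<and>
     (\<forall>f\<in>Hom A. \<forall>g\<in>Hom A. Tgt A f = Src A g \<longrightarrow>
        lar F (Cmp A g f) = Cmp B (lar F g) (lar F f)) \<and>
     \<comment> \<open>put: phi_{F,x} maps arrows of B out of F x to arrows of A out of x\<close>
     (\<forall>x\<in>Ob A. \<forall>b\<in>Hom B. Src B b = lob F x \<longrightarrow>
        lput F x b \<in> Hom A \<and> Src A (lput F x b) = x \<and> lar F (lput F x b) = b) \<and>
     (\<forall>x\<in>Ob A. lput F x (Idt B (lob F x)) = Idt A x) \<and>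
     (\<forall>x\<in>Ob A. \<forall>b\<in>Hom B. \<forall>b'\<in>Hom B. Src B b = lob F x \<longrightarrow> Src B b' = Tgt B b \<longrightarrow>
        lput F x (Cmp B b' b) = Cmp A (lput F (Tgt A (lput F x b)) b') (lput F x b)) \<and>
     \<comment> \<open>extensionality\<close>
     (\<forall>x. x \<notin> Ob A \<longrightarrow> lob F x = undefined) \<and>
     (\<forall>f. f \<notin> Hom A \<longrightarrow> lar F f = undefined) \<and>
     (\<forall>x b. \<not> (x \<in> Ob A \<and> b \<in> Hom B \<and> Src B b = lob F x) \<longrightarrow> lput F x b = undefined))"

definition id_lens :: "'u smallcat \<Rightarrow> 'u lens" where
  "id_lens C = \<lparr> lsrc = C, ltgt = C,
     lob = (\<lambda>x. if x \<in> Ob C then x else undefined),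
     lar = (\<lambda>f. if f \<in> Hom C then f else undefined),
     lput = (\<lambda>x b. if x \<in> Ob C \<and> b \<in> Hom C \<and> Src C b = x then b else undefined) \<rparr>"

definition comp_lens :: "'u lens \<Rightarrow> 'u lens \<Rightarrow> 'u lens" where
  "comp_lens G F = \<lparr> lsrc = lsrc F, ltgt = ltgt G,
     lob = (\<lambda>x. if x \<in> Ob (lsrc F) then lob G (lob F x) else undefined),
     lar = (\<lambda>f. if f \<in> Hom (lsrc F) then lar G (lar F f) else undefined),
     lput = (\<lambda>x c. if x \<in> Ob (lsrc F) \<and> c \<in> Hom (ltgt G) \<and> Src (ltgt G) c = lob G (lob F x)
                   then lput F x (lput G (lob F x) c) else undefined) \<rparr>"

definition LensCat :: "('u smallcat, 'u lens) category" where
  "LensCat = \<lparr> Ob = {C. is_category C}, Hom = {F. is_lens F},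
     Src = lsrc, Tgt = ltgt, Idt = id_lens, Cmp = comp_lens \<rparr>"

end

theory Submission
  imports Defs
begin

text \<open>Regular epimorphisms are strong, strong ones are extremal, and extremal ones are epic
  in every category, so it remains to show that every epimorphism \<open>F : A \<rightarrow> B\<close> of Lens is
  regular. First, such an \<open>F\<close> is surjective on objects: the objects \<open>F x\<close> form a subset of
  \<open>B\<close> that is closed under outgoing arrows (lift them with the put), so two copies of \<open>B\<close>
  can be glued along it; the two inclusion lenses agree after \<open>F\<close>, hence coincide, so
  nothing lies outside the glued part. Second, a lens that is surjective on objects is the
  coequalizer of its kernel pair, the category of pairs \<open>(a, a')\<close> with \<open>F a = F a'\<close>, whose
  projection lenses complete an arrow of one component by the put of \<open>F\<close> at the other: a
  lens \<open>h\<close> that coequalizes the projections does not depend on the choice of preimages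
  along \<open>F\<close>, and so descends to \<open>B\<close>. Pairs and tagged copies are encoded in the infinite
  universe by an injection \<open>'u \<times> 'u \<rightarrow> 'u\<close>.\<close>

context
  fixes C :: "('o, 'a) category"
  assumes C: "is_category C"
begin

lemma Src_in_Ob [simp]: "f \<in> Hom C \<Longrightarrow> Src C f \<in> Ob C"
  using C unfolding is_category_def by blast

lemma Tgt_in_Ob [simp]: "f \<in> Hom C \<Longrightarrow> Tgt C f \<in> Ob C"
  using C unfolding is_category_def by blast

lemma Idt_in_Hom [simp]: "x \<in> Ob C \<Longrightarrow> Idt C x \<in> Hom C"
  using C unfolding is_category_def by blast

lemma Src_Idt [simp]: "x \<in> Ob C \<Longrightarrow> Src C (Idt C x) = x"
  using C unfolding is_category_def by blast

lemma Tgt_Idt [simp]: "x \<in> Ob C \<Longrightarrow> Tgt C (Idt C x) = x"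
  using C unfolding is_category_def by blast

lemma Cmp_in_Hom [simp]:
  "f \<in> Hom C \<Longrightarrow> g \<in> Hom C \<Longrightarrow> Tgt C f = Src C g \<Longrightarrow> Cmp C g f \<in> Hom C"
  using C unfolding is_category_def by blast

lemma Src_Cmp [simp]:
  "f \<in> Hom C \<Longrightarrow> g \<in> Hom C \<Longrightarrow> Tgt C f = Src C g \<Longrightarrow> Src C (Cmp C g f) = Src C f"
  using C unfolding is_category_def by blast

lemma Tgt_Cmp [simp]:
  "f \<in> Hom C \<Longrightarrow> g \<in> Hom C \<Longrightarrow> Tgt C f = Src C g \<Longrightarrow> Tgt C (Cmp C g f) = Tgt C g"
  using C unfolding is_category_def by blast

lemma Cmp_assoc:
  "f \<in> Hom C \<Longrightarrow> g \<in> Hom C \<Longrightarrow> h \<in> Hom C \<Longrightarrow> Tgt C f = Src C g \<Longrightarrow> Tgt C g = Src C h \<Longrightarrow>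
    Cmp C h (Cmp C g f) = Cmp C (Cmp C h g) f"
  using C unfolding is_category_def by blast

lemma Cmp_Idt_left [simp]: "f \<in> Hom C \<Longrightarrow> Cmp C (Idt C (Tgt C f)) f = f"
  using C unfolding is_category_def by blast

lemma Cmp_Idt_right [simp]: "f \<in> Hom C \<Longrightarrow> Cmp C f (Idt C (Src C f)) = f"
  using C unfolding is_category_def by blast

end

lemma epiD:
  assumes "epi K e" "g \<in> Hom K" "h \<in> Hom K" "Src K g = Tgt K e" "Src K h = Tgt K e"
    "Tgt K g = Tgt K h" "Cmp K g e = Cmp K h e"
  shows "g = h"
  using assms unfolding epi_def by blast

lemma monoD:
  assumes "mono K m" "g \<in> Hom K" "h \<in> Hom K" "Tgt K g = Src K m" "Tgt K h = Src K m"
    "Src K g = Src K h" "Cmp K m g = Cmp K m h"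
  shows "g = h"
  using assms unfolding mono_def by blast

context
  fixes K :: "('o, 'a) category"
  assumes K: "is_category K"
begin

lemma coequalizer_Cmp_eq:
  assumes coeq: "coequalizer K u v e" and g: "g \<in> Hom K" "Src K g = Tgt K e"
  shows "Cmp K (Cmp K g e) u = Cmp K (Cmp K g e) v"
proof -
  have "u \<in> Hom K" "v \<in> Hom K" "e \<in> Hom K" "Src K e = Tgt K u" "Tgt K u = Tgt K v"
    "Cmp K e u = Cmp K e v"
    using coeq unfolding coequalizer_def by auto
  with g show ?thesis
    by (metis Cmp_assoc[OF K])
qed

lemma coequalizer_universal:
  assumes "coequalizer K u v e" "h \<in> Hom K" "Src K h = Src K e" "Cmp K h u = Cmp K h v"
  shows "\<exists>!k. k \<in> Hom K \<and> Src K k = Tgt K e \<and> Tgt K k = Tgt K h \<and> Cmp K k e = h"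
  using assms unfolding coequalizer_def by auto

lemma regular_epi_imp_epi:
  assumes "regular_epi K e"
  shows "epi K e"
  unfolding epi_def
proof (intro conjI ballI impI)
  obtain u v where coeq: "coequalizer K u v e"
    using assms unfolding regular_epi_def by blast
  then have e: "e \<in> Hom K" "Src K e = Tgt K u"
    unfolding coequalizer_def by auto
  then show "e \<in> Hom K" by simp
  fix g h
  assume g: "g \<in> Hom K" "Src K g = Tgt K e" and h: "h \<in> Hom K" "Src K h = Tgt K e"
    and "Tgt K g = Tgt K h" and ge_he: "Cmp K g e = Cmp K h e"
  have "\<exists>!k. k \<in> Hom K \<and> Src K k = Tgt K e \<and> Tgt K k = Tgt K (Cmp K g e) \<and> Cmp K k e = Cmp K g e"
    using coequalizer_universal[OF coeq _ _ coequalizer_Cmp_eq[OF coeq g]] e g K by simp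
  moreover have "Tgt K (Cmp K g e) = Tgt K g"
    using e g K by simp
  ultimately show "g = h"
    using g h \<open>Tgt K g = Tgt K h\<close> ge_he by (metis (no_types, lifting))
qed

lemma regular_epi_imp_strong_epi:
  assumes "regular_epi K e"
  shows "strong_epi K e"
  unfolding strong_epi_def
proof (intro conjI allI impI)
  show epi: "epi K e"
    using assms by (rule regular_epi_imp_epi)
  obtain u v where coeq: "coequalizer K u v e"
    using assms unfolding regular_epi_def by blast
  then have uv: "u \<in> Hom K" "v \<in> Hom K" "e \<in> Hom K" "Src K e = Tgt K u" "Tgt K u = Tgt K v"
    "Src K u = Src K v"
    unfolding coequalizer_def by auto
  fix m f g
  assume m: "mono K m" and f: "f \<in> Hom K" and g: "g \<in> Hom K"
    and f_src: "Src K f = Src K e" and f_tgt: "Tgt K f = Src K m"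
    and g_src: "Src K g = Tgt K e" and g_tgt: "Tgt K g = Tgt K m"
    and square: "Cmp K m f = Cmp K g e"
  have m_Hom: "m \<in> Hom K"
    using m unfolding mono_def by blast
  have "Cmp K m (Cmp K f u) = Cmp K m (Cmp K f v)"
    using coequalizer_Cmp_eq[OF coeq g g_src] square uv f f_src f_tgt m_Hom
    by (metis Cmp_assoc[OF K])
  then have "Cmp K f u = Cmp K f v"
    using monoD[OF m] uv f f_src f_tgt K by simp
  then obtain k where k: "k \<in> Hom K" "Src K k = Tgt K e" "Tgt K k = Tgt K f" "Cmp K k e = f"
    using coequalizer_universal[OF coeq f(1)] f_src uv by auto
  have "Cmp K (Cmp K m k) e = Cmp K g e"
    using k uv m_Hom f_tgt square by (metis Cmp_assoc[OF K])
  then have "Cmp K m k = g"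
    using epiD[OF epi] k m_Hom f_tgt g g_src g_tgt K by simp
  with k f_tgt show "\<exists>d\<in>Hom K. Src K d = Tgt K e \<and> Tgt K d = Src K m \<and> Cmp K d e = f \<and> Cmp K m d = g"
    by auto
qed

lemma strong_epi_imp_extremal_epi:
  assumes strong: "strong_epi K e"
  shows "extremal_epi K e"
  unfolding extremal_epi_def
proof (intro conjI allI impI)
  show "epi K e"
    using strong unfolding strong_epi_def by blast
  then have e: "e \<in> Hom K"
    unfolding epi_def by blast
  fix m g
  assume m: "mono K m" and g: "g \<in> Hom K" "Src K g = Src K e" "Tgt K g = Src K m"
    and m_tgt: "Tgt K m = Tgt K e" and mg: "Cmp K m g = e"
  have m_Hom: "m \<in> Hom K"
    using m unfolding mono_def by blast
  have id_e: "Idt K (Tgt K e) \<in> Hom K" "Src K (Idt K (Tgt K e)) = Tgt K e"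
    "Tgt K (Idt K (Tgt K e)) = Tgt K m" "Cmp K (Idt K (Tgt K e)) e = Cmp K m g"
    using mg m_tgt K e by simp_all
  obtain d where d: "d \<in> Hom K" "Src K d = Tgt K e" "Tgt K d = Src K m"
    "Cmp K m d = Idt K (Tgt K e)"
    using strong m g id_e unfolding strong_epi_def by metis
  have "Cmp K m (Cmp K d m) = Cmp K (Cmp K m d) m"
    using d m_Hom m_tgt K by (simp add: Cmp_assoc)
  also have "\<dots> = Cmp K m (Idt K (Src K m))"
    using d m_Hom K Cmp_Idt_left[OF K m_Hom] by (simp add: m_tgt[symmetric])
  finally have "Cmp K d m = Idt K (Src K m)"
    using monoD[OF m] d m_Hom m_tgt K by simp
  with d m_Hom m_tgt show "iso K m"
    unfolding iso_def by auto
qed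

end

context
  fixes F :: "'u lens"
  assumes F: "is_lens F"
begin

lemma category_lsrc [simp]: "is_category (lsrc F)"
  using F unfolding is_lens_def Let_def by blast

lemma category_ltgt [simp]: "is_category (ltgt F)"
  using F unfolding is_lens_def Let_def by blast

lemma lob_in_Ob [simp]: "x \<in> Ob (lsrc F) \<Longrightarrow> lob F x \<in> Ob (ltgt F)"
  using F unfolding is_lens_def Let_def by blast

lemma lar_in_Hom [simp]: "f \<in> Hom (lsrc F) \<Longrightarrow> lar F f \<in> Hom (ltgt F)"
  using F unfolding is_lens_def Let_def by blast

lemma Src_lar [simp]: "f \<in> Hom (lsrc F) \<Longrightarrow> Src (ltgt F) (lar F f) = lob F (Src (lsrc F) f)"
  using F unfolding is_lens_def Let_def by blast

lemma Tgt_lar [simp]: "f \<in> Hom (lsrc F) \<Longrightarrow> Tgt (ltgt F) (lar F f) = lob F (Tgt (lsrc F) f)"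
  using F unfolding is_lens_def Let_def by blast

lemma lar_Idt [simp]: "x \<in> Ob (lsrc F) \<Longrightarrow> lar F (Idt (lsrc F) x) = Idt (ltgt F) (lob F x)"
  using F unfolding is_lens_def Let_def by blast

lemma lar_Cmp [simp]:
  "f \<in> Hom (lsrc F) \<Longrightarrow> g \<in> Hom (lsrc F) \<Longrightarrow> Tgt (lsrc F) f = Src (lsrc F) g \<Longrightarrow>
    lar F (Cmp (lsrc F) g f) = Cmp (ltgt F) (lar F g) (lar F f)"
  using F unfolding is_lens_def Let_def by blast

lemma lput_in_Hom [simp]:
  "x \<in> Ob (lsrc F) \<Longrightarrow> b \<in> Hom (ltgt F) \<Longrightarrow> Src (ltgt F) b = lob F x \<Longrightarrow>
    lput F x b \<in> Hom (lsrc F)"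
  using F unfolding is_lens_def Let_def by blast

lemma Src_lput [simp]:
  "x \<in> Ob (lsrc F) \<Longrightarrow> b \<in> Hom (ltgt F) \<Longrightarrow> Src (ltgt F) b = lob F x \<Longrightarrow>
    Src (lsrc F) (lput F x b) = x"
  using F unfolding is_lens_def Let_def by blast

lemma lar_lput [simp]:
  "x \<in> Ob (lsrc F) \<Longrightarrow> b \<in> Hom (ltgt F) \<Longrightarrow> Src (ltgt F) b = lob F x \<Longrightarrow>
    lar F (lput F x b) = b"
  using F unfolding is_lens_def Let_def by blast

lemma lob_Tgt_lput:
  "x \<in> Ob (lsrc F) \<Longrightarrow> b \<in> Hom (ltgt F) \<Longrightarrow> Src (ltgt F) b = lob F x \<Longrightarrow>
    lob F (Tgt (lsrc F) (lput F x b)) = Tgt (ltgt F) b"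
  by (metis lput_in_Hom lar_lput Tgt_lar)

lemma lput_Idt [simp]: "x \<in> Ob (lsrc F) \<Longrightarrow> lput F x (Idt (ltgt F) (lob F x)) = Idt (lsrc F) x"
  using F unfolding is_lens_def Let_def by blast

lemma lput_Cmp:
  "x \<in> Ob (lsrc F) \<Longrightarrow> b \<in> Hom (ltgt F) \<Longrightarrow> b' \<in> Hom (ltgt F) \<Longrightarrow>
    Src (ltgt F) b = lob F x \<Longrightarrow> Src (ltgt F) b' = Tgt (ltgt F) b \<Longrightarrow>
    lput F x (Cmp (ltgt F) b' b) = Cmp (lsrc F) (lput F (Tgt (lsrc F) (lput F x b)) b') (lput F x b)"
  using F unfolding is_lens_def Let_def by blast

lemma lob_undefined: "x \<notin> Ob (lsrc F) \<Longrightarrow> lob F x = undefined"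
  using F unfolding is_lens_def Let_def by blast

lemma lar_undefined: "f \<notin> Hom (lsrc F) \<Longrightarrow> lar F f = undefined"
  using F unfolding is_lens_def Let_def by blast

lemma lput_undefined:
  "\<not> (x \<in> Ob (lsrc F) \<and> b \<in> Hom (ltgt F) \<and> Src (ltgt F) b = lob F x) \<Longrightarrow> lput F x b = undefined"
  using F unfolding is_lens_def Let_def by blast

end

lemma lens_eqI:
  fixes F G :: "'u lens"
  assumes "lsrc F = lsrc G" "ltgt F = ltgt G" "\<And>x. lob F x = lob G x" "\<And>f. lar F f = lar G f"
    "\<And>x b. lput F x b = lput G x b"
  shows "F = G"
  using assms by (intro lens.equality) (auto simp: fun_eq_iff)

lemma lsrc_id_lens [simp]: "lsrc (id_lens C) = C"
  and ltgt_id_lens [simp]: "ltgt (id_lens C) = C"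
  by (simp_all add: id_lens_def)

lemma lsrc_comp_lens [simp]: "lsrc (comp_lens G F) = lsrc F"
  and ltgt_comp_lens [simp]: "ltgt (comp_lens G F) = ltgt G"
  by (simp_all add: comp_lens_def)

lemma id_lens_is_lens: "is_category C \<Longrightarrow> is_lens (id_lens C)"
  unfolding is_lens_def id_lens_def Let_def by (auto simp: Cmp_assoc)

lemma comp_lens_is_lens:
  assumes F: "is_lens F" and G: "is_lens G" and FG: "ltgt F = lsrc G"
  shows "is_lens (comp_lens G F)"
proof -
  note F_simps = lob_in_Ob[OF F] lar_in_Hom[OF F] Src_lar[OF F] Tgt_lar[OF F] lar_Idt[OF F]
    lar_Cmp[OF F] lput_in_Hom[OF F] Src_lput[OF F] lar_lput[OF F] lput_Idt[OF F]
  note G_simps = lob_in_Ob[OF G] lar_in_Hom[OF G] Src_lar[OF G] Tgt_lar[OF G] lar_Idt[OF G]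
    lar_Cmp[OF G] lput_in_Hom[OF G] Src_lput[OF G] lar_lput[OF G] lput_Idt[OF G]
  note simps = F_simps[unfolded FG] G_simps category_lsrc[OF F] category_lsrc[OF G]
    category_ltgt[OF G]
  have lob_Tgt: "lob G (lob F (Tgt (lsrc F) (lput F x (lput G (lob F x) c)))) = Tgt (ltgt G) c"
    if "x \<in> Ob (lsrc F)" "c \<in> Hom (ltgt G)" "Src (ltgt G) c = lob G (lob F x)" for x c
    using that lob_Tgt_lput[OF F, of x "lput G (lob F x) c", unfolded FG]
      lob_Tgt_lput[OF G, of "lob F x" c] by (simp add: simps)
  have lput_Cmp: "lput F x (lput G (lob F x) (Cmp (ltgt G) c' c)) =
      Cmp (lsrc F) (lput F (Tgt (lsrc F) (lput F x (lput G (lob F x) c)))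
        (lput G (lob F (Tgt (lsrc F) (lput F x (lput G (lob F x) c)))) c'))
        (lput F x (lput G (lob F x) c))"
    if "x \<in> Ob (lsrc F)" "c \<in> Hom (ltgt G)" "c' \<in> Hom (ltgt G)"
      "Src (ltgt G) c = lob G (lob F x)" "Src (ltgt G) c' = Tgt (ltgt G) c" for x c c'
    using that lput_Cmp[OF F, of x "lput G (lob F x) c" "lput G (Tgt (lsrc G) (lput G (lob F x) c)) c'",
        unfolded FG]
      lput_Cmp[OF G, of "lob F x" c c'] lob_Tgt_lput[OF F, of x "lput G (lob F x) c", unfolded FG]
      lob_Tgt_lput[OF G, of "lob F x" c]
    by (simp add: simps)
  show ?thesis
    unfolding is_lens_def Let_def comp_lens_def
    by (simp add: simps lob_Tgt lput_Cmp)
qed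

lemma comp_lens_id_left:
  assumes F: "is_lens F"
  shows "comp_lens (id_lens (ltgt F)) F = F"
  by (rule lens_eqI)
    (auto simp: comp_lens_def id_lens_def F lob_undefined lar_undefined lput_undefined)

lemma comp_lens_id_right:
  assumes F: "is_lens F"
  shows "comp_lens F (id_lens (lsrc F)) = F"
  by (rule lens_eqI)
    (auto simp: comp_lens_def id_lens_def F lob_undefined lar_undefined lput_undefined)

lemma comp_lens_assoc:
  assumes F: "is_lens F" and G: "is_lens G" and H: "is_lens H"
    and FG: "ltgt F = lsrc G" and GH: "ltgt G = lsrc H"
  shows "comp_lens H (comp_lens G F) = comp_lens (comp_lens H G) F"
proof -
  note F_simps = lob_in_Ob[OF F] lar_in_Hom[OF F] Src_lar[OF F] lput_in_Hom[OF F]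
    lar_lput[OF F] Src_lput[OF F]
  note G_simps = lob_in_Ob[OF G] lar_in_Hom[OF G] Src_lar[OF G] lput_in_Hom[OF G]
    lar_lput[OF G] Src_lput[OF G]
  note H_simps = lput_in_Hom[OF H] Src_lput[OF H]
  show ?thesis
    by (rule lens_eqI)
      (auto simp: comp_lens_def F_simps[unfolded FG] G_simps[unfolded GH] H_simps FG GH)
qed

lemma LensCat_simps [simp]:
  "Ob LensCat = {C. is_category C}" "Hom LensCat = {F. is_lens F}"
  "Src LensCat = lsrc" "Tgt LensCat = ltgt" "Idt LensCat = id_lens" "Cmp LensCat = comp_lens"
  by (simp_all add: LensCat_def)

lemma is_category_LensCat: "is_category LensCat"
  unfolding is_category_def
  by (auto simp: id_lens_is_lens comp_lens_is_lens comp_lens_assoc comp_lens_id_left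
      comp_lens_id_right)

lemma infinite_UNIV_pair_encoding:
  assumes "infinite (UNIV :: 'u set)"
  obtains enc :: "'u \<times> 'u \<Rightarrow> 'u" where "inj enc"
proof -
  have "ordLeq3 (card_of ((UNIV :: 'u set) \<times> (UNIV :: 'u set))) (card_of (UNIV :: 'u set))"
    using card_of_Times_same_infinite[OF assms] unfolding ordIso_iff_ordLeq by (rule conjunct1)
  then show ?thesis
    using that unfolding card_of_ordLeq[symmetric] by auto
qed

locale lens_doubling =
  fixes F :: "'u lens" and enc :: "'u \<times> 'u \<Rightarrow> 'u" and c0 c1 :: 'u
  assumes lens: "is_lens F" and inj_enc: "inj enc" and tags_distinct: "c0 \<noteq> c1"
begin

abbreviation "A \<equiv> lsrc F"
abbreviation "B \<equiv> ltgt F"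

definition obj_image :: "'u set" where
  "obj_image = lob F ` Ob A"

text \<open>Copy \<open>c \<in> {c0, c1}\<close> of an object \<open>y\<close> of \<open>B\<close> is \<open>enc (y, tag y c)\<close>, and of an arrow \<open>b\<close>
  it is \<open>enc (b, tag (Src b) c)\<close>. Since \<open>obj_image\<close> is closed under outgoing arrows, this
  glues two copies of \<open>B\<close> along \<open>obj_image\<close> and its arrows.\<close>

definition tag :: "'u \<Rightarrow> 'u \<Rightarrow> 'u" where
  "tag y c = (if y \<in> obj_image then c0 else c)"

definition obj :: "'u \<Rightarrow> 'u \<Rightarrow> 'u" where
  "obj y c = enc (y, tag y c)"

definition arr :: "'u \<Rightarrow> 'u \<Rightarrow> 'u" where
  "arr b c = enc (b, tag (Src B b) c)"

definition dec :: "'u \<Rightarrow> 'u \<times> 'u" where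
  "dec = inv enc"

definition glued :: "'u smallcat" where
  "glued = \<lparr>Ob = {obj y c | y c. y \<in> Ob B \<and> c \<in> {c0, c1}},
     Hom = {arr b c | b c. b \<in> Hom B \<and> c \<in> {c0, c1}},
     Src = \<lambda>g. obj (Src B (fst (dec g))) (snd (dec g)),
     Tgt = \<lambda>g. obj (Tgt B (fst (dec g))) (snd (dec g)),
     Idt = \<lambda>z. arr (Idt B (fst (dec z))) (snd (dec z)),
     Cmp = \<lambda>g f. arr (Cmp B (fst (dec g)) (fst (dec f))) (snd (dec f))\<rparr>"

definition incl :: "'u \<Rightarrow> 'u lens" where
  "incl c = \<lparr>lsrc = B, ltgt = glued,
     lob = \<lambda>y. if y \<in> Ob B then obj y c else undefined,
     lar = \<lambda>b. if b \<in> Hom B then arr b c else undefined,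
     lput = \<lambda>y g. if y \<in> Ob B \<and> g \<in> Hom glued \<and> Src glued g = obj y c then fst (dec g)
                  else undefined\<rparr>"

lemma category_A [simp]: "is_category A" and category_B [simp]: "is_category B"
  using lens by simp_all

lemma lob_in_obj_image: "x \<in> Ob A \<Longrightarrow> lob F x \<in> obj_image"
  unfolding obj_image_def by blast

lemma obj_image_closed:
  assumes b: "b \<in> Hom B" and src: "Src B b \<in> obj_image"
  shows "Tgt B b \<in> obj_image"
proof -
  obtain x where x: "x \<in> Ob A" "lob F x = Src B b"
    using src unfolding obj_image_def by force
  then have "Tgt A (lput F x b) \<in> Ob A"
    using lens b by simp
  moreover have "lob F (Tgt A (lput F x b)) = Tgt B b"
    using lob_Tgt_lput[OF lens x(1) b] x by simp
  ultimately show ?thesis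
    unfolding obj_image_def by (metis image_eqI)
qed

lemma dec_obj [simp]: "dec (obj y c) = (y, tag y c)"
  and dec_arr [simp]: "dec (arr b c) = (b, tag (Src B b) c)"
  using inj_enc by (simp_all add: dec_def obj_def arr_def)

lemma obj_eq_iff: "obj y c = obj y' c' \<longleftrightarrow> y = y' \<and> tag y c = tag y' c'"
  unfolding obj_def using inj_enc by (auto dest: injD)

lemma arr_eq_iff: "arr b c = arr b' c' \<longleftrightarrow> b = b' \<and> tag (Src B b) c = tag (Src B b') c'"
  unfolding arr_def using inj_enc by (auto dest: injD)

lemma tag_idem [simp]: "tag y (tag y c) = tag y c"
  unfolding tag_def by simp

lemma obj_tag [simp]: "obj y (tag y c) = obj y c"
  unfolding obj_def tag_def by simp

lemma obj_Tgt_tag_Src: "b \<in> Hom B \<Longrightarrow> obj (Tgt B b) (tag (Src B b) c) = obj (Tgt B b) c"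
  unfolding obj_eq_iff using obj_image_closed unfolding tag_def by auto

lemma obj_Tgt_cong:
  "obj (Src B b) c = obj (Src B b) c' \<Longrightarrow> b \<in> Hom B \<Longrightarrow> obj (Tgt B b) c = obj (Tgt B b) c'"
  unfolding obj_eq_iff using obj_image_closed unfolding tag_def by (auto split: if_splits)

lemma glued_simps [simp]:
  "Src glued (arr b c) = obj (Src B b) c"
  "b \<in> Hom B \<Longrightarrow> Tgt glued (arr b c) = obj (Tgt B b) c"
  "y \<in> Ob B \<Longrightarrow> Idt glued (obj y c) = arr (Idt B y) c"
  "b \<in> Hom B \<Longrightarrow> b' \<in> Hom B \<Longrightarrow> Tgt B b = Src B b' \<Longrightarrow>
    Cmp glued (arr b' c') (arr b c) = arr (Cmp B b' b) c"
  by (auto simp: glued_def obj_Tgt_tag_Src arr_eq_iff)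

lemma obj_in_Ob_glued: "y \<in> Ob B \<Longrightarrow> c \<in> {c0, c1} \<Longrightarrow> obj y c \<in> Ob glued"
  and arr_in_Hom_glued: "b \<in> Hom B \<Longrightarrow> c \<in> {c0, c1} \<Longrightarrow> arr b c \<in> Hom glued"
  unfolding glued_def by auto

lemma Ob_gluedE:
  "z \<in> Ob glued \<Longrightarrow> (\<And>y c. z = obj y c \<Longrightarrow> y \<in> Ob B \<Longrightarrow> c \<in> {c0, c1} \<Longrightarrow> P) \<Longrightarrow> P"
  unfolding glued_def by auto

lemma Hom_gluedE:
  "g \<in> Hom glued \<Longrightarrow> (\<And>b c. g = arr b c \<Longrightarrow> b \<in> Hom B \<Longrightarrow> c \<in> {c0, c1} \<Longrightarrow> P) \<Longrightarrow> P"
  unfolding glued_def by auto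

lemma Hom_glued_from_objE:
  assumes "g \<in> Hom glued" "Src glued g = obj y c" "y \<in> Ob B"
  obtains b where "b \<in> Hom B" "Src B b = y" "g = arr b c"
proof -
  obtain b c' where b: "g = arr b c'" "b \<in> Hom B"
    using assms(1) by (rule Hom_gluedE)
  have "Src B b = y" "tag y c' = tag y c"
    using assms(2) b by (auto simp: obj_eq_iff)
  with b have "g = arr b c"
    by (simp add: arr_eq_iff)
  with b \<open>Src B b = y\<close> that show ?thesis by blast
qed

lemma composable_glued:
  "b \<in> Hom B \<Longrightarrow> Tgt glued (arr b c) = Src glued (arr b' c') \<Longrightarrow> Tgt B b = Src B b'"
  by (simp add: obj_eq_iff)

lemma is_category_glued: "is_category glued"
  unfolding is_category_def
proof (intro conjI ballI impI)
  fix f g h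
  assume f: "f \<in> Hom glued" and g: "g \<in> Hom glued" and h: "h \<in> Hom glued"
    and fg: "Tgt glued f = Src glued g" and gh: "Tgt glued g = Src glued h"
  obtain b c where b: "f = arr b c" "b \<in> Hom B"
    using f by (rule Hom_gluedE)
  obtain b' c' where b': "g = arr b' c'" "b' \<in> Hom B"
    using g by (rule Hom_gluedE)
  obtain b'' c'' where b'': "h = arr b'' c''" "b'' \<in> Hom B"
    using h by (rule Hom_gluedE)
  have "Tgt B b = Src B b'" "Tgt B b' = Src B b''"
    using composable_glued b b' b'' fg gh by simp_all
  with b b' b'' show "Cmp glued h (Cmp glued g f) = Cmp glued (Cmp glued h g) f"
    by (simp add: Cmp_assoc)
next
  fix f g
  assume f: "f \<in> Hom glued" and g: "g \<in> Hom glued" and fg: "Tgt glued f = Src glued g"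
  obtain b c where b: "f = arr b c" "b \<in> Hom B" "c \<in> {c0, c1}"
    using f by (rule Hom_gluedE)
  obtain b' c' where b': "g = arr b' c'" "b' \<in> Hom B" "c' \<in> {c0, c1}"
    using g by (rule Hom_gluedE)
  have "Tgt B b = Src B b'"
    using composable_glued b b' fg by simp
  with b b' fg obj_Tgt_cong[of b' c c']
  show "Cmp glued g f \<in> Hom glued" "Src glued (Cmp glued g f) = Src glued f"
    "Tgt glued (Cmp glued g f) = Tgt glued g"
    by (auto intro!: arr_in_Hom_glued)
qed (auto elim!: Hom_gluedE Ob_gluedE intro!: obj_in_Ob_glued arr_in_Hom_glued)

lemma lsrc_incl [simp]: "lsrc (incl c) = B" and ltgt_incl [simp]: "ltgt (incl c) = glued"
  by (simp_all add: incl_def)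

lemma incl_is_lens:
  assumes c: "c \<in> {c0, c1}"
  shows "is_lens (incl c)"
  unfolding is_lens_def Let_def lsrc_incl ltgt_incl
proof (intro conjI ballI allI impI is_category_glued category_B)
  fix y g g'
  assume y: "y \<in> Ob B" and g: "g \<in> Hom glued" and g': "g' \<in> Hom glued"
    and g_src: "Src glued g = lob (incl c) y" and g'_src: "Src glued g' = Tgt glued g"
  obtain b where b: "b \<in> Hom B" "Src B b = y" "g = arr b c"
    using g g_src y by (auto simp: incl_def elim: Hom_glued_from_objE)
  obtain b' where b': "b' \<in> Hom B" "Src B b' = Tgt B b" "g' = arr b' c"
    using g' g'_src b by (auto elim: Hom_glued_from_objE)
  show "lput (incl c) y (Cmp glued g' g) =
      Cmp B (lput (incl c) (Tgt B (lput (incl c) y g)) g') (lput (incl c) y g)"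
    using b b' y c by (auto simp: incl_def intro!: arr_in_Hom_glued)
qed (use c in \<open>auto simp: incl_def intro!: obj_in_Ob_glued arr_in_Hom_glued
    elim: Hom_glued_from_objE\<close>)

lemma incl_comp_eq: "comp_lens (incl c0) F = comp_lens (incl c1) F"
proof (rule lens_eqI)
  show "lob (comp_lens (incl c0) F) x = lob (comp_lens (incl c1) F) x" for x
    using lob_in_obj_image[of x] lens by (auto simp: comp_lens_def incl_def obj_def tag_def)
  show "lar (comp_lens (incl c0) F) f = lar (comp_lens (incl c1) F) f" for f
    using lob_in_obj_image[of "Src A f"] lens
    by (auto simp: comp_lens_def incl_def arr_def tag_def)
  have "x \<in> Ob A \<Longrightarrow> obj (lob F x) c0 = obj (lob F x) c1" for x
    using lob_in_obj_image[of x] by (simp add: obj_def tag_def)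
  then show "lput (comp_lens (incl c0) F) x b = lput (comp_lens (incl c1) F) x b" for x b
    using lens by (auto simp: comp_lens_def incl_def)
qed simp_all

lemma incl_neq:
  assumes "y \<in> Ob B" "y \<notin> obj_image"
  shows "incl c0 \<noteq> incl c1"
proof
  assume "incl c0 = incl c1"
  then have "lob (incl c0) y = lob (incl c1) y" by simp
  with assms tags_distinct show False
    by (simp add: incl_def obj_eq_iff tag_def)
qed

lemma epi_imp_surj_on_objects:
  assumes "epi LensCat F"
  shows "Ob B \<subseteq> lob F ` Ob A"
proof
  fix y
  assume y: "y \<in> Ob B"
  have "incl c0 = incl c1"
    by (rule epiD[OF assms]) (use incl_is_lens incl_comp_eq in auto)
  with y incl_neq show "y \<in> lob F ` Ob A"
    unfolding obj_image_def by blast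
qed

end

lemma epi_LensCat_surj_on_objects:
  assumes "infinite (UNIV :: 'u set)" and epi: "epi LensCat (F :: 'u lens)"
  shows "Ob (ltgt F) \<subseteq> lob F ` Ob (lsrc F)"
proof -
  obtain enc :: "'u \<times> 'u \<Rightarrow> 'u" where "inj enc"
    using infinite_UNIV_pair_encoding[OF assms(1)] .
  moreover have "\<exists>c :: 'u. c \<notin> {undefined}"
    by (rule ex_new_if_finite[OF assms(1)]) simp
  then obtain c :: 'u where "c \<noteq> undefined"
    by blast
  moreover have "is_lens F"
    using epi unfolding epi_def by simp
  ultimately interpret lens_doubling F enc c undefined
    by unfold_locales
  show ?thesis
    using epi by (rule epi_imp_surj_on_objects)
qed

locale lens_kernel_pair =
  fixes F :: "'u lens" and enc :: "'u \<times> 'u \<Rightarrow> 'u"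
  assumes lens [simp]: "is_lens F" and inj_enc: "inj enc"
    and surj_on_objects: "Ob (ltgt F) \<subseteq> lob F ` Ob (lsrc F)"
begin

abbreviation "A \<equiv> lsrc F"
abbreviation "B \<equiv> ltgt F"

definition dec :: "'u \<Rightarrow> 'u \<times> 'u" where
  "dec = inv enc"

lemma dec_enc [simp]: "dec (enc p) = p"
  unfolding dec_def using inj_enc by simp

lemma enc_eq_iff [simp]: "enc p = enc q \<longleftrightarrow> p = q"
  using inj_enc by (auto dest: injD)

lemma Ob_B_preimageE:
  assumes "y \<in> Ob B"
  obtains x where "x \<in> Ob A" "y = lob F x"
  using assms surj_on_objects by blast

lemma Hom_B_preimageE:
  assumes "b \<in> Hom B"
  obtains x where "x \<in> Ob A" "Src B b = lob F x"
  using assms surj_on_objects Src_in_Ob[OF category_ltgt[OF lens]] by blast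

lemma lob_Src_cong:
  "a \<in> Hom A \<Longrightarrow> a' \<in> Hom A \<Longrightarrow> lar F a = lar F a' \<Longrightarrow> lob F (Src A a) = lob F (Src A a')"
  by (metis Src_lar lens)

lemma lob_Tgt_cong:
  "a \<in> Hom A \<Longrightarrow> a' \<in> Hom A \<Longrightarrow> lar F a = lar F a' \<Longrightarrow> lob F (Tgt A a) = lob F (Tgt A a')"
  by (metis Tgt_lar lens)

definition kernel :: "'u smallcat" where
  "kernel = \<lparr>Ob = {enc (x, x') | x x'. x \<in> Ob A \<and> x' \<in> Ob A \<and> lob F x = lob F x'},
     Hom = {enc (a, a') | a a'. a \<in> Hom A \<and> a' \<in> Hom A \<and> lar F a = lar F a'},
     Src = \<lambda>g. enc (Src A (fst (dec g)), Src A (snd (dec g))),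
     Tgt = \<lambda>g. enc (Tgt A (fst (dec g)), Tgt A (snd (dec g))),
     Idt = \<lambda>z. enc (Idt A (fst (dec z)), Idt A (snd (dec z))),
     Cmp = \<lambda>g f. enc (Cmp A (fst (dec g)) (fst (dec f)), Cmp A (snd (dec g)) (snd (dec f)))\<rparr>"

lemma kernel_simps [simp]:
  "Src kernel (enc (a, a')) = enc (Src A a, Src A a')"
  "Tgt kernel (enc (a, a')) = enc (Tgt A a, Tgt A a')"
  "Idt kernel (enc (x, x')) = enc (Idt A x, Idt A x')"
  "Cmp kernel (enc (b, b')) (enc (a, a')) = enc (Cmp A b a, Cmp A b' a')"
  "enc (x, x') \<in> Ob kernel \<longleftrightarrow> x \<in> Ob A \<and> x' \<in> Ob A \<and> lob F x = lob F x'"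
  "enc (a, a') \<in> Hom kernel \<longleftrightarrow> a \<in> Hom A \<and> a' \<in> Hom A \<and> lar F a = lar F a'"
  by (auto simp: kernel_def)

lemma Ob_kernelE:
  "z \<in> Ob kernel \<Longrightarrow>
    (\<And>x x'. z = enc (x, x') \<Longrightarrow> x \<in> Ob A \<Longrightarrow> x' \<in> Ob A \<Longrightarrow> lob F x = lob F x' \<Longrightarrow> P) \<Longrightarrow> P"
  unfolding kernel_def by auto

lemma Hom_kernelE:
  "g \<in> Hom kernel \<Longrightarrow>
    (\<And>a a'. g = enc (a, a') \<Longrightarrow> a \<in> Hom A \<Longrightarrow> a' \<in> Hom A \<Longrightarrow> lar F a = lar F a' \<Longrightarrow> P) \<Longrightarrow> P"
  unfolding kernel_def by auto

lemma is_category_kernel: "is_category kernel"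
  unfolding is_category_def
proof (intro conjI ballI impI)
  fix g
  assume "g \<in> Hom kernel"
  then obtain a a' where a: "g = enc (a, a')" "a \<in> Hom A" "a' \<in> Hom A" "lar F a = lar F a'"
    by (rule Hom_kernelE)
  with lob_Src_cong[OF a(2-4)] lob_Tgt_cong[OF a(2-4)]
  show "Src kernel g \<in> Ob kernel" "Tgt kernel g \<in> Ob kernel"
    by simp_all
next
  fix f g h
  assume "f \<in> Hom kernel" "g \<in> Hom kernel" "h \<in> Hom kernel"
    and "Tgt kernel f = Src kernel g" "Tgt kernel g = Src kernel h"
  then show "Cmp kernel h (Cmp kernel g f) = Cmp kernel (Cmp kernel h g) f"
    by (auto elim!: Hom_kernelE simp: Cmp_assoc)
qed (auto elim!: Hom_kernelE Ob_kernelE)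

definition proj1 :: "'u lens" where
  "proj1 = \<lparr>lsrc = kernel, ltgt = A,
     lob = \<lambda>z. if z \<in> Ob kernel then fst (dec z) else undefined,
     lar = \<lambda>g. if g \<in> Hom kernel then fst (dec g) else undefined,
     lput = \<lambda>z a. if z \<in> Ob kernel \<and> a \<in> Hom A \<and> Src A a = fst (dec z)
                  then enc (a, lput F (snd (dec z)) (lar F a)) else undefined\<rparr>"

definition proj2 :: "'u lens" where
  "proj2 = \<lparr>lsrc = kernel, ltgt = A,
     lob = \<lambda>z. if z \<in> Ob kernel then snd (dec z) else undefined,
     lar = \<lambda>g. if g \<in> Hom kernel then snd (dec g) else undefined,
     lput = \<lambda>z a. if z \<in> Ob kernel \<and> a \<in> Hom A \<and> Src A a = snd (dec z)
                  then enc (lput F (fst (dec z)) (lar F a), a) else undefined\<rparr>"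

lemma lsrc_proj [simp]: "lsrc proj1 = kernel" "lsrc proj2 = kernel"
  and ltgt_proj [simp]: "ltgt proj1 = A" "ltgt proj2 = A"
  by (simp_all add: proj1_def proj2_def)

lemma lput_Idt_lob_eq: "x \<in> Ob A \<Longrightarrow> lob F x = y \<Longrightarrow> lput F x (Idt B y) = Idt A x"
  by auto

lemma proj1_is_lens: "is_lens proj1"
  unfolding is_lens_def Let_def lsrc_proj ltgt_proj
proof (intro conjI ballI allI impI is_category_kernel category_lsrc[OF lens])
  fix z a a'
  assume z: "z \<in> Ob kernel" and a: "a \<in> Hom A" "Src A a = lob proj1 z"
    and a': "a' \<in> Hom A" "Src A a' = Tgt A a"
  obtain x x' where x: "z = enc (x, x')" "x \<in> Ob A" "x' \<in> Ob A" "lob F x = lob F x'"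
    using z by (rule Ob_kernelE)
  with a have "Src A a = x"
    by (simp add: proj1_def)
  with x a a' lob_Tgt_lput[OF lens, of x' "lar F a"] lput_Cmp[OF lens, of x' "lar F a" "lar F a'"]
  show "lput proj1 z (Cmp A a' a) = Cmp kernel (lput proj1 (Tgt kernel (lput proj1 z a)) a') (lput proj1 z a)"
    by (simp add: proj1_def)
qed (auto simp: proj1_def lob_Tgt_lput lput_Idt_lob_eq elim!: Ob_kernelE Hom_kernelE
    intro: lob_Src_cong lob_Tgt_cong)

lemma proj2_is_lens: "is_lens proj2"
  unfolding is_lens_def Let_def lsrc_proj ltgt_proj
proof (intro conjI ballI allI impI is_category_kernel category_lsrc[OF lens])
  fix z a a'
  assume z: "z \<in> Ob kernel" and a: "a \<in> Hom A" "Src A a = lob proj2 z"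
    and a': "a' \<in> Hom A" "Src A a' = Tgt A a"
  obtain x x' where x: "z = enc (x, x')" "x \<in> Ob A" "x' \<in> Ob A" "lob F x = lob F x'"
    using z by (rule Ob_kernelE)
  with a have "Src A a = x'"
    by (simp add: proj2_def)
  with x a a' lob_Tgt_lput[OF lens, of x "lar F a"] lput_Cmp[OF lens, of x "lar F a" "lar F a'"]
  show "lput proj2 z (Cmp A a' a) = Cmp kernel (lput proj2 (Tgt kernel (lput proj2 z a)) a') (lput proj2 z a)"
    by (simp add: proj2_def)
qed (auto simp: proj2_def lob_Tgt_lput lput_Idt_lob_eq elim!: Ob_kernelE Hom_kernelE
    intro: lob_Src_cong lob_Tgt_cong)

lemma comp_proj_eq: "comp_lens F proj1 = comp_lens F proj2"
proof (rule lens_eqI)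
  show "lob (comp_lens F proj1) z = lob (comp_lens F proj2) z" for z
    by (cases "z \<in> Ob kernel") (auto simp: comp_lens_def proj1_def proj2_def elim: Ob_kernelE)
  show "lar (comp_lens F proj1) g = lar (comp_lens F proj2) g" for g
    by (cases "g \<in> Hom kernel") (auto simp: comp_lens_def proj1_def proj2_def elim: Hom_kernelE)
  show "lput (comp_lens F proj1) z b = lput (comp_lens F proj2) z b" for z b
    by (cases "z \<in> Ob kernel") (auto simp: comp_lens_def proj1_def proj2_def elim!: Ob_kernelE)
qed simp_all

end

context lens_kernel_pair
begin

definition preimage :: "'u \<Rightarrow> 'u" where
  "preimage y = (SOME x. x \<in> Ob A \<and> lob F x = y)"

lemma preimage:
  assumes "y \<in> Ob B"
  shows "preimage y \<in> Ob A" "lob F (preimage y) = y"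
proof -
  obtain x where "x \<in> Ob A" "lob F x = y"
    using assms by (metis Ob_B_preimageE)
  then show "preimage y \<in> Ob A" "lob F (preimage y) = y"
    unfolding preimage_def by (metis (mono_tags, lifting) someI)+
qed

definition descend :: "'u lens \<Rightarrow> 'u lens" where
  "descend h = \<lparr>lsrc = B, ltgt = ltgt h,
     lob = \<lambda>y. if y \<in> Ob B then lob h (preimage y) else undefined,
     lar = \<lambda>b. if b \<in> Hom B then lar h (lput F (preimage (Src B b)) b) else undefined,
     lput = \<lambda>y d. if y \<in> Ob B \<and> d \<in> Hom (ltgt h) \<and> Src (ltgt h) d = lob h (preimage y)
                 then lar F (lput h (preimage y) d) else undefined\<rparr>"

lemma lsrc_descend [simp]: "lsrc (descend h) = B"
  and ltgt_descend [simp]: "ltgt (descend h) = ltgt h"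
  by (simp_all add: descend_def)

context
  fixes h :: "'u lens"
  assumes h: "is_lens h" and h_src: "lsrc h = A"
    and h_coeq: "comp_lens h proj1 = comp_lens h proj2"
begin

abbreviation "D \<equiv> ltgt h"

lemmas h_simps [simp] = category_ltgt[OF h]
  lob_in_Ob[OF h, unfolded h_src] lar_in_Hom[OF h, unfolded h_src]
  Src_lar[OF h, unfolded h_src] Tgt_lar[OF h, unfolded h_src] lar_Idt[OF h, unfolded h_src]
  lar_Cmp[OF h, unfolded h_src] lput_in_Hom[OF h, unfolded h_src]
  Src_lput[OF h, unfolded h_src] lar_lput[OF h, unfolded h_src] lput_Idt[OF h, unfolded h_src]

lemma lob_cong:
  assumes "x \<in> Ob A" "x' \<in> Ob A" "lob F x = lob F x'"
  shows "lob h x = lob h x'"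
proof -
  have "lob (comp_lens h proj1) (enc (x, x')) = lob (comp_lens h proj2) (enc (x, x'))"
    using h_coeq by simp
  with assms show ?thesis
    by (simp add: comp_lens_def proj1_def proj2_def)
qed

lemma lar_cong:
  assumes "a \<in> Hom A" "a' \<in> Hom A" "lar F a = lar F a'"
  shows "lar h a = lar h a'"
proof -
  have "lar (comp_lens h proj1) (enc (a, a')) = lar (comp_lens h proj2) (enc (a, a'))"
    using h_coeq by simp
  with assms show ?thesis
    by (simp add: comp_lens_def proj1_def proj2_def)
qed

text \<open>Comparing the puts of \<open>h \<circ> proj1\<close> and \<open>h \<circ> proj2\<close> at \<open>(x, x')\<close>: the put of \<open>h\<close> at \<open>x\<close> is
  recovered from the put at \<open>x'\<close> by transporting along \<open>F\<close>.\<close>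

lemma lput_eq_lput_lar_lput:
  assumes x: "x \<in> Ob A" "x' \<in> Ob A" "lob F x = lob F x'" and d: "d \<in> Hom D" "Src D d = lob h x"
  shows "lput h x d = lput F x (lar F (lput h x' d))"
proof -
  have z: "enc (x, x') \<in> Ob kernel"
    using x by simp
  have d': "Src D d = lob h x'"
    using lob_cong[OF x] d by simp
  have "lput (comp_lens h proj1) (enc (x, x')) d = enc (lput h x d, lput F x' (lar F (lput h x d)))"
    using z x d by (simp add: comp_lens_def proj1_def)
  moreover have "lput (comp_lens h proj2) (enc (x, x')) d = enc (lput F x (lar F (lput h x' d)), lput h x' d)"
    using z x d d' by (simp add: comp_lens_def proj2_def)
  ultimately show ?thesis
    using h_coeq by auto
qed

lemma lar_lput_cong:
  assumes x: "x \<in> Ob A" "x' \<in> Ob A" "lob F x = lob F x'" and d: "d \<in> Hom D" "Src D d = lob h x"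
  shows "lar F (lput h x d) = lar F (lput h x' d)"
proof -
  have "Src D d = lob h x'"
    using lob_cong[OF x] d by simp
  then have "lar F (lput h x' d) \<in> Hom B" "Src B (lar F (lput h x' d)) = lob F x"
    using x d by simp_all
  then show ?thesis
    using lput_eq_lput_lar_lput[OF x d] x by simp
qed

lemma lob_descend:
  assumes "x \<in> Ob A"
  shows "lob (descend h) (lob F x) = lob h x"
  using assms preimage[of "lob F x"] lob_cong[of "preimage (lob F x)" x] by (simp add: descend_def)

lemma lar_descend:
  assumes "x \<in> Ob A" "b \<in> Hom B" "Src B b = lob F x"
  shows "lar (descend h) b = lar h (lput F x b)"
  using assms preimage[of "Src B b"] lar_cong[of "lput F (preimage (Src B b)) b" "lput F x b"]
  by (simp add: descend_def)

lemma lput_descend: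
  assumes "x \<in> Ob A" "d \<in> Hom D" "Src D d = lob h x"
  shows "lput (descend h) (lob F x) d = lar F (lput h x d)"
  using assms preimage[of "lob F x"] lob_cong[of "preimage (lob F x)" x]
    lar_lput_cong[of "preimage (lob F x)" x d]
  by (simp add: descend_def)

lemma lar_descend_Cmp:
  assumes b: "b \<in> Hom B" "b' \<in> Hom B" "Tgt B b = Src B b'"
  shows "lar (descend h) (Cmp B b' b) = Cmp D (lar (descend h) b') (lar (descend h) b)"
proof -
  obtain x where x: "x \<in> Ob A" "Src B b = lob F x"
    using b(1) by (rule Hom_B_preimageE)
  define x' where "x' = Tgt A (lput F x b)"
  have x': "x' \<in> Ob A" "Src B b' = lob F x'"
    using x b lob_Tgt_lput[OF lens x(1) b(1)] by (simp_all add: x'_def)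
  have "lar (descend h) (Cmp B b' b) = lar h (lput F x (Cmp B b' b))"
    using x b by (simp add: lar_descend)
  also have "\<dots> = lar h (Cmp A (lput F x' b') (lput F x b))"
    using x b by (simp add: lput_Cmp x'_def)
  also have "\<dots> = Cmp D (lar h (lput F x' b')) (lar h (lput F x b))"
    using x x' b by (simp add: x'_def)
  also have "\<dots> = Cmp D (lar (descend h) b') (lar (descend h) b)"
    using x x' b by (simp add: lar_descend)
  finally show ?thesis .
qed

lemma lput_descend_Cmp:
  assumes x: "x \<in> Ob A" and d: "d \<in> Hom D" "d' \<in> Hom D" "Src D d = lob h x" "Src D d' = Tgt D d"
  shows "lput (descend h) (lob F x) (Cmp D d' d) =
    Cmp B (lput (descend h) (Tgt B (lput (descend h) (lob F x) d)) d') (lput (descend h) (lob F x) d)"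
proof -
  define x' where "x' = Tgt A (lput h x d)"
  have x': "x' \<in> Ob A" "Src D d' = lob h x'"
    using x d lob_Tgt_lput[OF h, of x d] by (simp_all add: x'_def h_src)
  have tgt: "Tgt B (lput (descend h) (lob F x) d) = lob F x'"
    using x d by (simp add: lput_descend x'_def)
  have "lput (descend h) (lob F x) (Cmp D d' d) = lar F (lput h x (Cmp D d' d))"
    using x d by (simp add: lput_descend)
  also have "\<dots> = lar F (Cmp A (lput h x' d') (lput h x d))"
    using x d lput_Cmp[OF h, of x d d'] by (simp add: x'_def h_src)
  also have "\<dots> = Cmp B (lar F (lput h x' d')) (lar F (lput h x d))"
    using x x' d by (simp add: x'_def)
  also have "\<dots> = Cmp B (lput (descend h) (lob F x') d') (lput (descend h) (lob F x) d)"
    using x x' d by (simp add: lput_descend)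
  finally show ?thesis
    using tgt by simp
qed

lemma descend_is_lens: "is_lens (descend h)"
  unfolding is_lens_def Let_def lsrc_descend ltgt_descend
proof (intro conjI ballI allI impI category_ltgt[OF lens] category_ltgt[OF h])
  fix y
  assume "y \<in> Ob B"
  then obtain x where x: "x \<in> Ob A" "y = lob F x"
    by (rule Ob_B_preimageE)
  then show "lob (descend h) y \<in> Ob D"
    by (simp add: lob_descend)
  show "lar (descend h) (Idt B y) = Idt D (lob (descend h) y)"
    using x by (simp add: lar_descend lob_descend)
  show "lput (descend h) y (Idt D (lob (descend h) y)) = Idt B y"
    using x by (simp add: lput_descend lob_descend)
  fix d d'
  assume d: "d \<in> Hom D" "Src D d = lob (descend h) y"
  then show "lput (descend h) y d \<in> Hom B" "Src B (lput (descend h) y d) = y"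
    "lar (descend h) (lput (descend h) y d) = d"
    using x lput_eq_lput_lar_lput[of x x d] by (simp_all add: lob_descend lput_descend lar_descend)
  assume "d' \<in> Hom D" "Src D d' = Tgt D d"
  with x d show "lput (descend h) y (Cmp D d' d) =
      Cmp B (lput (descend h) (Tgt B (lput (descend h) y d)) d') (lput (descend h) y d)"
    by (simp add: lput_descend_Cmp lob_descend)
next
  fix b
  assume b: "b \<in> Hom B"
  then obtain x where x: "x \<in> Ob A" "Src B b = lob F x"
    by (rule Hom_B_preimageE)
  with b show "lar (descend h) b \<in> Hom D" "Src D (lar (descend h) b) = lob (descend h) (Src B b)"
    by (simp_all add: lar_descend lob_descend)
  from b x show "Tgt D (lar (descend h) b) = lob (descend h) (Tgt B b)"
    using lob_Tgt_lput[OF lens x(1) b] lob_descend[of "Tgt A (lput F x b)"]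
    by (simp add: lar_descend)
next
  fix b b'
  assume "b \<in> Hom B" "b' \<in> Hom B" "Tgt B b = Src B b'"
  then show "lar (descend h) (Cmp B b' b) = Cmp D (lar (descend h) b') (lar (descend h) b)"
    by (rule lar_descend_Cmp)
qed (auto simp: descend_def)

lemma descend_comp: "comp_lens (descend h) F = h"
proof (rule lens_eqI)
  show "lob (comp_lens (descend h) F) x = lob h x" for x
    using lob_undefined[OF h] by (simp add: comp_lens_def lob_descend h_src)
  show "lar (comp_lens (descend h) F) f = lar h f" for f
    using lar_undefined[OF h] lar_descend[of "Src A f" "lar F f"]
      lar_cong[of "lput F (Src A f) (lar F f)" f]
    by (simp add: comp_lens_def h_src)
  show "lput (comp_lens (descend h) F) x d = lput h x d" for x d
    using lput_undefined[OF h] lput_descend[of x d] lput_eq_lput_lar_lput[of x x d] lob_descend[of x]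
    by (auto simp: comp_lens_def h_src)
qed (simp_all add: h_src)

end

lemma coequalizer_kernel_pair:
  assumes epi: "epi LensCat F"
  shows "coequalizer LensCat proj1 proj2 F"
  unfolding coequalizer_def
proof (intro conjI ballI impI)
  fix h
  assume "h \<in> Hom LensCat" "Src LensCat h = Tgt LensCat proj1"
    and "Cmp LensCat h proj1 = Cmp LensCat h proj2"
  then have h: "is_lens h" "lsrc h = A" "comp_lens h proj1 = comp_lens h proj2"
    by simp_all
  show "\<exists>!k. k \<in> Hom LensCat \<and> Src LensCat k = Tgt LensCat F \<and> Tgt LensCat k = Tgt LensCat h \<and>
      Cmp LensCat k F = h"
  proof (rule ex1I[of _ "descend h"])
    show "descend h \<in> Hom LensCat \<and> Src LensCat (descend h) = Tgt LensCat F \<and>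
        Tgt LensCat (descend h) = Tgt LensCat h \<and> Cmp LensCat (descend h) F = h"
      using descend_is_lens[OF h] descend_comp[OF h] by simp
    fix k
    assume k: "k \<in> Hom LensCat \<and> Src LensCat k = Tgt LensCat F \<and> Tgt LensCat k = Tgt LensCat h \<and>
        Cmp LensCat k F = h"
    show "k = descend h"
      by (rule epiD[OF epi]) (use k descend_is_lens[OF h] descend_comp[OF h] in auto)
  qed
qed (simp_all add: proj1_is_lens proj2_is_lens comp_proj_eq)

end

lemma epi_LensCat_imp_regular_epi:
  assumes "infinite (UNIV :: 'u set)" and epi: "epi LensCat (F :: 'u lens)"
  shows "regular_epi LensCat F"
proof -
  obtain enc :: "'u \<times> 'u \<Rightarrow> 'u" where "inj enc"
    using infinite_UNIV_pair_encoding[OF assms(1)] .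
  moreover have "is_lens F"
    using epi unfolding epi_def by simp
  ultimately interpret lens_kernel_pair F enc
    using epi_LensCat_surj_on_objects[OF assms] by unfold_locales
  show ?thesis
    unfolding regular_epi_def using coequalizer_kernel_pair[OF epi] by blast
qed

theorem corollary6p5:
  fixes e :: "'u lens"
  assumes "infinite (UNIV :: 'u set)"
    and "e \<in> Hom LensCat"
  shows "(epi LensCat e \<longleftrightarrow> regular_epi LensCat e) \<and>
         (epi LensCat e \<longleftrightarrow> strong_epi LensCat e) \<and>
         (epi LensCat e \<longleftrightarrow> extremal_epi LensCat e)"
proof -
  have "epi LensCat e \<Longrightarrow> regular_epi LensCat e"
    using assms(1) by (rule epi_LensCat_imp_regular_epi)
  moreover have "regular_epi LensCat e \<Longrightarrow> strong_epi LensCat e"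
    by (rule regular_epi_imp_strong_epi[OF is_category_LensCat])
  moreover have "strong_epi LensCat e \<Longrightarrow> extremal_epi LensCat e"
    by (rule strong_epi_imp_extremal_epi[OF is_category_LensCat])
  moreover have "extremal_epi LensCat e \<Longrightarrow> epi LensCat e"
    unfolding extremal_epi_def by blast
  ultimately show ?thesis
    by blast
qed

end
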